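(* Let $\mathbb{F}$ be an algebraically closed field, $d\ge3$, and let $s\in\mathbb{F}$ be nonzero; assume $\mathrm{Char}(\mathbb{F})$ is $0$ or greater than $d$, and $s^2\neq1$. Let $A,A^*\in\mathrm{Mat}_{d+1}(\mathbb{F})$ (indices $0,\dots,d$) have all diagonal entries $0$ and, for $1\le i\le d$, $A_{i,i-1}=1$, $A_{i-1,i}=i(d-i+1)$, $A^*_{i,i-1}=s$, $A^*_{i-1,i}=s^{-1}i(d-i+1)$, all other entries $0$. Then $A,A^*$ is a Leonard pair in $\mathrm{Mat}_{d+1}(\mathbb{F})$ with fundamental parameter $\beta=2$, and it has a parameter array with $\theta_i=\theta^*_i=d-2i$ $(0\le i\le d)$, $\varphi_i=i(d-i+1)(s+s^{-1}-2)$, $\phi_i=i(d-i+1)(s+s^{-1}+2)$ $(1\le i\le d)$.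
   Context: A Leonard pair in $\mathrm{Mat}_{d+1}(\mathbb{F})$ is a pair of matrices $A,A^*$ such that there is a basis of $\mathbb{F}^{d+1}$ in which $A$ is irreducible tridiagonal (tridiagonal with all sub/superdiagonal entries nonzero) and $A^*$ diagonal, and a basis in which $A^*$ is irreducible tridiagonal and $A$ diagonal. A Leonard system is $(A,\{E_i\}_{i=0}^d,A^*,\{E^*_i\}_{i=0}^d)$ where $A,A^*$ each have $d+1$ distinct eigenvalues, $\{E_i\},\{E^*_i\}$ are orderings of their primitive idempotents, and $E_iA^*E_j,E^*_iAE^*_j$ are $0$ for $|i-j|>1$ and nonzero for $|i-j|=1$. Eigenvalue sequences: $AE_i=\theta_iE_i$, $A^*E^*_i=\theta^*_iE^*_i$. First split sequence: for nonzero $v\in E^*_0V$, $u_i=(A-\theta_{i-1}I)\cdots(A-\theta_0I)v$ form a basis in which $A^*$ is upper bidiagonal with diagonal $\theta^*_0,\dots,\theta^*_d$ and superdiagonal $\varphi_1,\dots,\varphi_d$. Second split sequence $\{\phi_i\}$: first split sequence of $(A,\{E_{d-i}\},A^*,\{E^*_i\})$. A parameter array of a Leonard pair is $(\{\theta_i\},\{\theta^*_i\},\{\varphi_i\},\{\phi_i\})$ for an associated Leonard system. Fundamental parameter: one less than the common value of $(\theta_{i-2}-\theta_{i+1})/(\theta_{i-1}-\theta_i)$, $2\le i\le d-1$. *)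

theory Defs
  imports "Jordan_Normal_Form.Matrix" "HOL-Computational_Algebra.Polynomial"
begin

text \<open>A basis of F^(d+1) is given by the columns of an invertible matrix P;
  the matrix representing A in that basis is the M with A * P = P * M.\<close>

definition irred_tridiag :: "nat \<Rightarrow> 'a::field mat \<Rightarrow> bool" where
  "irred_tridiag n M \<longleftrightarrow> M \<in> carrier_mat n n \<and>
     (\<forall>i<n. \<forall>j<n. (i + 1 < j \<or> j + 1 < i) \<longrightarrow> M $$ (i, j) = 0) \<and>
     (\<forall>i. i + 1 < n \<longrightarrow> M $$ (i, i + 1) \<noteq> 0 \<and> M $$ (i + 1, i) \<noteq> 0)"

definition leonard_pair :: "nat \<Rightarrow> 'a::field mat \<Rightarrow> 'a mat \<Rightarrow> bool" where
  "leonard_pair d A As \<longleftrightarrow> A \<in> carrier_mat (d+1) (d+1) \<and> As \<in> carrier_mat (d+1) (d+1) \<and>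
     (\<exists>P M N. P \<in> carrier_mat (d+1) (d+1) \<and> invertible_mat P \<and>
        A * P = P * M \<and> As * P = P * N \<and> irred_tridiag (d+1) M \<and>
        N \<in> carrier_mat (d+1) (d+1) \<and> diagonal_mat N) \<and>
     (\<exists>Q M N. Q \<in> carrier_mat (d+1) (d+1) \<and> invertible_mat Q \<and>
        As * Q = Q * M \<and> A * Q = Q * N \<and> irred_tridiag (d+1) M \<and>
        N \<in> carrier_mat (d+1) (d+1) \<and> diagonal_mat N)"

definition is_eigenvalue :: "nat \<Rightarrow> 'a::field mat \<Rightarrow> 'a \<Rightarrow> bool" where
  "is_eigenvalue n A t \<longleftrightarrow> (\<exists>v \<in> carrier_vec n. v \<noteq> 0\<^sub>v n \<and> A *\<^sub>v v = t \<cdot>\<^sub>v v)"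

definition prim_idem :: "nat \<Rightarrow> 'a::field mat \<Rightarrow> (nat \<Rightarrow> 'a) \<Rightarrow> nat \<Rightarrow> 'a mat" where
  "prim_idem d A th i =
     foldr (\<lambda>j M. ((1 / (th i - th j)) \<cdot>\<^sub>m (A - th j \<cdot>\<^sub>m 1\<^sub>m (d+1))) * M)
       (filter (\<lambda>j. j \<noteq> i) [0..<d+1]) (1\<^sub>m (d+1))"

text \<open>Leonard system (A, {E_i}, A*, {E*_i}); the eigenvalue sequences th, ths (A E_i = th_i E_i,
  A* E*_i = ths_i E*_i) are recorded as extra arguments, they are determined by the E_i.\<close>
definition leonard_system :: "nat \<Rightarrow> 'a::field mat \<Rightarrow> (nat \<Rightarrow> 'a) \<Rightarrow> (nat \<Rightarrow> 'a mat)
     \<Rightarrow> 'a mat \<Rightarrow> (nat \<Rightarrow> 'a) \<Rightarrow> (nat \<Rightarrow> 'a mat) \<Rightarrow> bool" where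
  "leonard_system d A th E As ths Es \<longleftrightarrow>
     A \<in> carrier_mat (d+1) (d+1) \<and> As \<in> carrier_mat (d+1) (d+1) \<and>
     (\<forall>i\<le>d. is_eigenvalue (d+1) A (th i)) \<and> (\<forall>i\<le>d. \<forall>j\<le>d. i \<noteq> j \<longrightarrow> th i \<noteq> th j) \<and>
     (\<forall>i\<le>d. is_eigenvalue (d+1) As (ths i)) \<and> (\<forall>i\<le>d. \<forall>j\<le>d. i \<noteq> j \<longrightarrow> ths i \<noteq> ths j) \<and>
     (\<forall>i\<le>d. E i = prim_idem d A th i) \<and> (\<forall>i\<le>d. Es i = prim_idem d As ths i) \<and>
     (\<forall>i\<le>d. \<forall>j\<le>d. (i + 1 < j \<or> j + 1 < i) \<longrightarrow>
         E i * As * E j = 0\<^sub>m (d+1) (d+1) \<and> Es i * A * Es j = 0\<^sub>m (d+1) (d+1)) \<and>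
     (\<forall>i\<le>d. \<forall>j\<le>d. (i = j + 1 \<or> j = i + 1) \<longrightarrow>
         E i * As * E j \<noteq> 0\<^sub>m (d+1) (d+1) \<and> Es i * A * Es j \<noteq> 0\<^sub>m (d+1) (d+1))"

text \<open>phi is the first split sequence of the Leonard system with A-eigenvalue sequence th and
  A*-eigenvalue sequence ths: for some nonzero v in E*_0 V, the vectors
  u_i = (A - th_(i-1) I) ... (A - th_0 I) v form a basis in which A* is upper bidiagonal with
  diagonal ths_0..ths_d and superdiagonal phi_1..phi_d.\<close>
definition split_vec :: "nat \<Rightarrow> 'a::field mat \<Rightarrow> (nat \<Rightarrow> 'a) \<Rightarrow> 'a vec \<Rightarrow> nat \<Rightarrow> 'a vec" where
  "split_vec d A th v i = foldl (\<lambda>x j. (A - th j \<cdot>\<^sub>m 1\<^sub>m (d+1)) *\<^sub>v x) v [0..<i]"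

definition first_split :: "nat \<Rightarrow> 'a::field mat \<Rightarrow> (nat \<Rightarrow> 'a) \<Rightarrow> 'a mat \<Rightarrow> (nat \<Rightarrow> 'a)
     \<Rightarrow> (nat \<Rightarrow> 'a) \<Rightarrow> bool" where
  "first_split d A th As ths phi \<longleftrightarrow>
     (\<exists>w \<in> carrier_vec (d+1).
        let v = prim_idem d As ths 0 *\<^sub>v w;
            U = mat_of_cols (d+1) (map (split_vec d A th v) [0..<d+1]);
            B = mat (d+1) (d+1) (\<lambda>(i, j). if i = j then ths i else if j = i + 1 then phi j else 0)
        in v \<noteq> 0\<^sub>v (d+1) \<and> invertible_mat U \<and> As * U = U * B)"

definition second_split :: "nat \<Rightarrow> 'a::field mat \<Rightarrow> (nat \<Rightarrow> 'a) \<Rightarrow> 'a mat \<Rightarrow> (nat \<Rightarrow> 'a)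
     \<Rightarrow> (nat \<Rightarrow> 'a) \<Rightarrow> bool" where
  "second_split d A th As ths phi' \<longleftrightarrow> first_split d A (\<lambda>i. th (d - i)) As ths phi'"

definition parameter_array :: "nat \<Rightarrow> 'a::field mat \<Rightarrow> 'a mat \<Rightarrow> (nat \<Rightarrow> 'a) \<Rightarrow> (nat \<Rightarrow> 'a)
     \<Rightarrow> (nat \<Rightarrow> 'a) \<Rightarrow> (nat \<Rightarrow> 'a) \<Rightarrow> bool" where
  "parameter_array d A As th ths phi phi' \<longleftrightarrow>
     (\<exists>E Es. leonard_system d A th E As ths Es \<and>
        first_split d A th As ths phi \<and> second_split d A th As ths phi')"

definition fundamental_parameter :: "nat \<Rightarrow> 'a::field mat \<Rightarrow> 'a mat \<Rightarrow> 'a \<Rightarrow> bool" where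
  "fundamental_parameter d A As beta \<longleftrightarrow>
     (\<exists>th E ths Es. leonard_system d A th E As ths Es \<and>
        (\<forall>i. 2 \<le> i \<and> i \<le> d - 1 \<longrightarrow>
           (th (i - 2) - th (i + 1)) / (th (i - 1) - th i) = beta + 1))"

end

theory Submission
  imports Defs "Jordan_Normal_Form.Determinant"
begin

text \<open>Identify F^(d+1) with the polynomials of degree at most d, weighting x^j by (d - j)!. Then
  A and A* are the matrices of the differential operators \<alpha> (d x - x^2 \<partial>) + \<beta> \<partial> + \<gamma>
  (elements of sl2 acting on binary forms of degree d) for (\<alpha>, \<beta>, \<gamma>) = (1, 1, 0) and (s, 1/s, 0).
  Such an operator is tridiagonal in every basis (1 + a x)^(d-i) (1 + b x)^i with a \<noteq> b, with
  explicit coefficients, and diagonal with eigenvalues \<gamma> + (d - 2i) \<beta> a when b = -a and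
  \<alpha> = \<beta> a^2. The basis for (a, b) = (1, -1) diagonalises A and makes A* irreducible tridiagonal,
  the one for (s, -s) does the converse; distinct eigenvalues d - 2i then give a Leonard system.
  For (a, b) = (s, -1) resp. (s, 1) the operator A - \<theta>_i resp. A - \<theta>_(d-i) maps the i-th
  basis vector to a multiple of the next one while A* is lower bidiagonal, and rescaling this basis
  yields the split bases and the sequences \<phi> and \<phi>'.\<close>

section \<open>Invertible matrices\<close>

lemma invertible_mat_obtain_inverse:
  assumes "invertible_mat (A :: 'a::field mat)" and "A \<in> carrier_mat n n"
  obtains B where "B \<in> carrier_mat n n" "A * B = 1\<^sub>m n" "B * A = 1\<^sub>m n"
proof -
  from assms obtain B where B: "A * B = 1\<^sub>m (dim_row A)" "B * A = 1\<^sub>m (dim_row B)"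
    unfolding invertible_mat_def inverts_mat_def by auto
  have "dim_col B = n" using arg_cong[OF B(1), of dim_col] assms(2) by simp
  moreover have "dim_row B = n" using arg_cong[OF B(2), of dim_col] assms(2) by simp
  ultimately show ?thesis using that B assms(2) by auto
qed

lemma invertible_mat_iff_det_nonzero:
  assumes A: "(A :: 'a::field mat) \<in> carrier_mat n n"
  shows "invertible_mat A \<longleftrightarrow> det A \<noteq> 0"
proof
  assume "invertible_mat A"
  then obtain B where B: "B \<in> carrier_mat n n" "A * B = 1\<^sub>m n"
    using A by (rule invertible_mat_obtain_inverse)
  have "det A * det B = 1" using det_mult[OF A B(1)] B(2) by simp
  then show "det A \<noteq> 0" by auto
next
  assume "det A \<noteq> 0"
  then have "A \<in> Units (ring_mat TYPE('a) n undefined)" by (rule det_non_zero_imp_unit[OF A])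
  then obtain B where "B \<in> carrier_mat n n" "B * A = 1\<^sub>m n" "A * B = 1\<^sub>m n"
    unfolding Units_def ring_mat_def by auto
  then show "invertible_mat A"
    using A unfolding invertible_mat_def inverts_mat_def square_mat.simps by auto
qed

lemma det_upper_triangular_nonzero:
  assumes "upper_triangular A" and A: "(A :: 'a::field mat) \<in> carrier_mat n n"
    and "\<And>i. i < n \<Longrightarrow> A $$ (i, i) \<noteq> 0"
  shows "det A \<noteq> 0"
  using assms A unfolding det_upper_triangular[OF assms(1) A]
  by (auto simp: prod_list_zero_iff diag_mat_def)

lemma invertible_mat_diag:
  assumes "\<And>i. i < n \<Longrightarrow> f i \<noteq> (0 :: 'a::field)"
  shows "invertible_mat (mat_diag n f)"
proof -
  have "upper_triangular (mat_diag n f)" by (auto simp: upper_triangular_def mat_diag_def)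
  then have "det (mat_diag n f) \<noteq> 0"
    by (rule det_upper_triangular_nonzero) (use assms in \<open>auto simp: mat_diag_def\<close>)
  then show ?thesis by (simp add: invertible_mat_iff_det_nonzero[OF mat_diag_dim])
qed

lemma col_nonzero_if_invertible:
  assumes "invertible_mat (U :: 'a::field mat)" and U: "U \<in> carrier_mat n n" and "j < n"
  shows "col U j \<noteq> 0\<^sub>v n"
proof
  assume col: "col U j = 0\<^sub>v n"
  obtain V where V: "V \<in> carrier_mat n n" "V * U = 1\<^sub>m n"
    using assms(1,2) by (rule invertible_mat_obtain_inverse)
  have "unit_vec n j = col (V * U) j" using V(2) \<open>j < n\<close> by simp
  also have "\<dots> = V *\<^sub>v col U j" by (rule col_mult2[OF V(1) U \<open>j < n\<close>])
  also have "\<dots> = 0\<^sub>v n" unfolding col by (rule eq_vecI) (use V(1) in \<open>auto simp: row_def\<close>)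
  finally show False using \<open>j < n\<close> by (metis index_unit_vec(1) index_zero_vec(1) zero_neq_one)
qed

lemma intertwined_eq_zero_iff:
  fixes X M U :: "'a::field mat"
  assumes X: "X \<in> carrier_mat n n" and M: "M \<in> carrier_mat n n" and U: "U \<in> carrier_mat n n"
    and "invertible_mat U" and XU: "X * U = U * M"
  shows "X = 0\<^sub>m n n \<longleftrightarrow> M = 0\<^sub>m n n"
proof -
  obtain V where V: "V \<in> carrier_mat n n" "U * V = 1\<^sub>m n" "V * U = 1\<^sub>m n"
    using assms(4) U by (rule invertible_mat_obtain_inverse)
  have "X = X * (U * V)" using X V(2) by simp
  also have "\<dots> = U * M * V" using X U V(1) XU by (simp add: assoc_mult_mat[symmetric])
  finally have X_eq: "X = U * M * V" .
  have "M = (V * U) * M" using M V(3) by simp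
  also have "\<dots> = V * X * U" using X U V(1) M XU by (simp add: assoc_mult_mat)
  finally have M_eq: "M = V * X * U" .
  show ?thesis
  proof
    assume "X = 0\<^sub>m n n" then show "M = 0\<^sub>m n n" using M_eq U V(1) by simp
  next
    assume "M = 0\<^sub>m n n" then show "X = 0\<^sub>m n n" using X_eq U V(1) by simp
  qed
qed

lemma col_mult_mat_diag:
  assumes "(U :: 'a::field mat) \<in> carrier_mat n n" and "j < n"
  shows "col (U * mat_diag n f) j = f j \<cdot>\<^sub>v col U j"
  using assms by (auto simp: mat_diag_mult_right)

section \<open>Matrices of operators in a basis\<close>

definition basis_mat :: "nat \<Rightarrow> (nat \<Rightarrow> 'a vec) \<Rightarrow> 'a mat" where
  "basis_mat d u = mat (d+1) (d+1) (\<lambda>(k, j). u j $ k)"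

lemma basis_mat_carrier [simp]: "basis_mat d u \<in> carrier_mat (d+1) (d+1)"
  and basis_mat_dim [simp]: "dim_row (basis_mat d u) = d+1" "dim_col (basis_mat d u) = d+1"
  by (simp_all add: basis_mat_def)

lemma mat_of_cols_eq_basis_mat: "mat_of_cols (d+1) (map u [0..<d+1]) = basis_mat d u"
  by (rule eq_matI) (auto simp: basis_mat_def mat_of_cols_index simp del: upt_Suc)

lemma col_basis_mat: "j \<le> d \<Longrightarrow> u j \<in> carrier_vec (d+1) \<Longrightarrow> col (basis_mat d u) j = u j"
  by (auto simp: basis_mat_def)

lemma basis_mat_scale:
  assumes "\<And>j. u j \<in> carrier_vec (d+1)"
  shows "basis_mat d (\<lambda>j. k j \<cdot>\<^sub>v u j) = basis_mat d u * mat_diag (d+1) (k :: nat \<Rightarrow> 'a::field)"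
  unfolding mat_diag_mult_right[OF basis_mat_carrier]
  by (rule eq_matI) (use assms[THEN carrier_vecD] in \<open>auto simp: basis_mat_def mult.commute\<close>)

text \<open>Column j holds the coefficients of Y u_j = x0_j u_j + x1_j u_(j-1) + x2_j u_(j+1).\<close>
definition tridiag_mat :: "nat \<Rightarrow> (nat \<Rightarrow> 'a::zero) \<Rightarrow> (nat \<Rightarrow> 'a) \<Rightarrow> (nat \<Rightarrow> 'a) \<Rightarrow> 'a mat" where
  "tridiag_mat d x0 x1 x2 = mat (d+1) (d+1) (\<lambda>(k, j). if k = j then x0 j else if k + 1 = j then x1 j
       else if k = j + 1 then x2 j else 0)"

text \<open>The conditions on x1 0 and x2 d make the junk vectors u (0 - 1) and u (d + 1) irrelevant.\<close>
definition acts_tridiag :: "nat \<Rightarrow> 'a::field mat \<Rightarrow> (nat \<Rightarrow> 'a vec)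
    \<Rightarrow> (nat \<Rightarrow> 'a) \<Rightarrow> (nat \<Rightarrow> 'a) \<Rightarrow> (nat \<Rightarrow> 'a) \<Rightarrow> bool" where
  "acts_tridiag d Y u x0 x1 x2 \<longleftrightarrow> x1 0 = 0 \<and> x2 d = 0 \<and>
     (\<forall>j\<le>d. Y *\<^sub>v u j = x0 j \<cdot>\<^sub>v u j + x1 j \<cdot>\<^sub>v u (j - 1) + x2 j \<cdot>\<^sub>v u (j + 1))"

lemma tridiag_mat_carrier [simp]: "tridiag_mat d x0 x1 x2 \<in> carrier_mat (d+1) (d+1)"
  and tridiag_mat_dim [simp]: "dim_row (tridiag_mat d x0 x1 x2) = d+1" "dim_col (tridiag_mat d x0 x1 x2) = d+1"
  by (simp_all add: tridiag_mat_def)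

lemma tridiag_mat_diag: "tridiag_mat d x0 (\<lambda>_. 0) (\<lambda>_. 0) = mat_diag (d+1) x0"
  by (rule eq_matI) (auto simp: tridiag_mat_def mat_diag_def)

lemma irred_tridiag_tridiag_mat:
  assumes "\<And>j. 0 < j \<Longrightarrow> j \<le> d \<Longrightarrow> x1 j \<noteq> 0" and "\<And>j. j < d \<Longrightarrow> x2 j \<noteq> 0"
  shows "irred_tridiag (d+1) (tridiag_mat d x0 x1 x2)"
  using assms by (auto simp: irred_tridiag_def tridiag_mat_def)

lemma sum_mult_tridiag_mat_col:
  assumes "x1 0 = 0" and "x2 d = 0" and j: "j \<le> d"
  shows "(\<Sum>k<d+1. z k * tridiag_mat d x0 x1 x2 $$ (k, j))
     = z j * x0 j + z (j - 1) * x1 j + z (j + 1) * (x2 j :: 'a::field)"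
proof -
  have "(\<Sum>k<d+1. z k * tridiag_mat d x0 x1 x2 $$ (k, j))
    = (\<Sum>k<d+1. if k = j then z k * x0 j else 0) + (\<Sum>k<d+1. if k = j - 1 \<and> 0 < j then z k * x1 j else 0)
      + (\<Sum>k<d+1. if k = j + 1 then z k * x2 j else 0)"
    unfolding sum.distrib[symmetric] by (rule sum.cong) (use j in \<open>auto simp: tridiag_mat_def\<close>)
  also have "\<dots> = z j * x0 j + z (j - 1) * x1 j + z (j + 1) * x2 j"
    using assms by (cases "j = 0"; cases "j = d") (auto simp: sum.delta)
  finally show ?thesis .
qed

lemma mult_basis_mat_tridiag:
  assumes Y: "Y \<in> carrier_mat (d+1) (d+1)" and u: "\<And>j. u j \<in> carrier_vec (d+1)"
    and act: "acts_tridiag d Y u x0 x1 x2"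
  shows "Y * basis_mat d u = basis_mat d u * tridiag_mat d x0 x1 x2"
proof (rule eq_matI)
  fix r j
  assume "r < dim_row (basis_mat d u * tridiag_mat d x0 x1 x2)"
    and "j < dim_col (basis_mat d u * tridiag_mat d x0 x1 x2)"
  then have r: "r \<le> d" and j: "j \<le> d" by (auto simp: basis_mat_def tridiag_mat_def)
  have "(Y * basis_mat d u) $$ (r, j) = row Y r \<bullet> col (basis_mat d u) j"
    using Y r j by simp
  also have "\<dots> = (Y *\<^sub>v u j) $ r"
    using Y r by (simp add: col_basis_mat[OF j u])
  also have "\<dots> = u j $ r * x0 j + u (j - 1) $ r * x1 j + u (j + 1) $ r * x2 j"
    using act j r u[THEN carrier_vecD] by (simp add: acts_tridiag_def mult.commute)
  also have "\<dots> = (\<Sum>k<d+1. u k $ r * tridiag_mat d x0 x1 x2 $$ (k, j))"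
    by (rule sum_mult_tridiag_mat_col[symmetric]) (use act j in \<open>auto simp: acts_tridiag_def\<close>)
  also have "\<dots> = (basis_mat d u * tridiag_mat d x0 x1 x2) $$ (r, j)"
    using r j by (simp add: basis_mat_def scalar_prod_def lessThan_atLeast0 tridiag_mat_def)
  finally show "(Y * basis_mat d u) $$ (r, j) = (basis_mat d u * tridiag_mat d x0 x1 x2) $$ (r, j)" .
qed (use Y in auto)

lemma acts_tridiag_cong:
  assumes "acts_tridiag d Y u x0 x1 x2"
    and "\<And>j. j \<le> d \<Longrightarrow> x0 j = y0 j \<and> x1 j = y1 j \<and> x2 j = y2 j"
  shows "acts_tridiag d Y u y0 y1 y2"
  using assms unfolding acts_tridiag_def by (metis le0 order_refl)

section \<open>Primitive idempotents and Leonard systems\<close>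

lemma foldr_factor_mat_carrier:
  assumes "(A :: 'a::field mat) \<in> carrier_mat n n"
  shows "foldr (\<lambda>j M. (c j \<cdot>\<^sub>m (A - t j \<cdot>\<^sub>m 1\<^sub>m n)) * M) js (1\<^sub>m n) \<in> carrier_mat n n"
  by (induction js) (use assms in \<open>auto simp: minus_carrier_mat\<close>)

lemma prim_idem_carrier:
  "A \<in> carrier_mat (d+1) (d+1) \<Longrightarrow> prim_idem d A th i \<in> carrier_mat (d+1) (d+1)"
  unfolding prim_idem_def by (rule foldr_factor_mat_carrier)

lemma factor_mat_mult_eigenvector:
  fixes A :: "'a::field mat"
  assumes A: "A \<in> carrier_mat n n" and v: "v \<in> carrier_vec n" and Av: "A *\<^sub>v v = th \<cdot>\<^sub>v v"
  shows "(c \<cdot>\<^sub>m (A - t \<cdot>\<^sub>m 1\<^sub>m n)) *\<^sub>v v = (c * (th - t)) \<cdot>\<^sub>v v"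
proof -
  have sm: "(c \<cdot>\<^sub>m B) *\<^sub>v v = c \<cdot>\<^sub>v (B *\<^sub>v v)" if "B \<in> carrier_mat n n" for B c
    by (rule eq_vecI) (use that v in auto)
  have "(A - t \<cdot>\<^sub>m 1\<^sub>m n) *\<^sub>v v = A *\<^sub>v v - (t \<cdot>\<^sub>m 1\<^sub>m n) *\<^sub>v v"
    by (rule minus_mult_distrib_mat_vec[OF A _ v]) simp
  also have "\<dots> = (th - t) \<cdot>\<^sub>v v"
    unfolding Av sm[OF one_carrier_mat] by (rule eq_vecI) (use v in \<open>auto simp: algebra_simps\<close>)
  moreover have "A - t \<cdot>\<^sub>m 1\<^sub>m n \<in> carrier_mat n n" by (simp add: minus_carrier_mat)
  ultimately show ?thesis using sm by (simp add: smult_smult_assoc)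
qed

lemma foldr_factor_mat_mult_eigenvector:
  fixes A :: "'a::field mat"
  assumes A: "A \<in> carrier_mat n n" and v: "v \<in> carrier_vec n" and Av: "A *\<^sub>v v = th \<cdot>\<^sub>v v"
  shows "foldr (\<lambda>j M. (c j \<cdot>\<^sub>m (A - t j \<cdot>\<^sub>m 1\<^sub>m n)) * M) js (1\<^sub>m n) *\<^sub>v v
    = prod_list (map (\<lambda>j. c j * (th - t j)) js) \<cdot>\<^sub>v v"
proof (induction js)
  case Nil
  then show ?case using v by simp
next
  case (Cons j js)
  let ?M = "foldr (\<lambda>j M. (c j \<cdot>\<^sub>m (A - t j \<cdot>\<^sub>m 1\<^sub>m n)) * M) js (1\<^sub>m n)"
  let ?F = "c j \<cdot>\<^sub>m (A - t j \<cdot>\<^sub>m 1\<^sub>m n)"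
  have F: "?F \<in> carrier_mat n n" by (simp add: minus_carrier_mat)
  have "(?F * ?M) *\<^sub>v v = ?F *\<^sub>v (?M *\<^sub>v v)"
    by (rule assoc_mult_mat_vec[OF F foldr_factor_mat_carrier[OF A] v])
  also have "\<dots> = prod_list (map (\<lambda>j. c j * (th - t j)) js) \<cdot>\<^sub>v (?F *\<^sub>v v)"
    unfolding Cons.IH by (rule mult_mat_vec[OF F v])
  also have "\<dots> = prod_list (map (\<lambda>j. c j * (th - t j)) (j # js)) \<cdot>\<^sub>v v"
    unfolding factor_mat_mult_eigenvector[OF A v Av] by (simp add: smult_smult_assoc mult.commute)
  finally show ?case by simp
qed

lemma prim_idem_mult_eigenvector:
  fixes A :: "'a::field mat"
  assumes A: "A \<in> carrier_mat (d+1) (d+1)" and v: "v \<in> carrier_vec (d+1)"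
    and Av: "A *\<^sub>v v = th k \<cdot>\<^sub>v v" and k: "k \<le> d" and i: "i \<le> d"
    and dist: "\<forall>i\<le>d. \<forall>j\<le>d. i \<noteq> j \<longrightarrow> th i \<noteq> th j"
  shows "prim_idem d A th i *\<^sub>v v = (if k = i then v else 0\<^sub>v (d+1))"
proof -
  let ?js = "filter (\<lambda>j. j \<noteq> i) [0..<d+1]"
  let ?r = "prod_list (map (\<lambda>j. 1 / (th i - th j) * (th k - th j)) ?js)"
  have "prim_idem d A th i *\<^sub>v v = ?r \<cdot>\<^sub>v v"
    unfolding prim_idem_def by (rule foldr_factor_mat_mult_eigenvector[OF A v Av])
  moreover have "?r = (if k = i then 1 else 0)"
  proof -
    have r: "?r = (\<Prod>j\<in>set ?js. 1 / (th i - th j) * (th k - th j))"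
      by (rule prod.distinct_set_conv_list[symmetric]) simp
    show ?thesis
    proof (cases "k = i")
      case True
      then show ?thesis unfolding r using dist i by (auto intro!: prod.neutral)
    next
      case False
      then have "k \<in> set ?js" using k by auto
      then show ?thesis unfolding r using False by (auto simp: prod_zero_iff)
    qed
  qed
  ultimately show ?thesis using v by auto
qed

lemma eigenvector_if_mult_mat_diag:
  fixes X U :: "'a::field mat"
  assumes X: "X \<in> carrier_mat n n" and U: "U \<in> carrier_mat n n"
    and XU: "X * U = U * mat_diag n th" and "j < n"
  shows "X *\<^sub>v col U j = th j \<cdot>\<^sub>v col U j"
proof -
  have "X *\<^sub>v col U j = col (X * U) j" using col_mult2[OF X U \<open>j < n\<close>] by simp
  also have "\<dots> = th j \<cdot>\<^sub>v col U j" unfolding XU by (rule col_mult_mat_diag[OF U \<open>j < n\<close>])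
  finally show ?thesis .
qed

lemma is_eigenvalue_if_mult_mat_diag:
  assumes "(X :: 'a::field mat) \<in> carrier_mat (d+1) (d+1)" and U: "U \<in> carrier_mat (d+1) (d+1)"
    and "invertible_mat U" and "X * U = U * mat_diag (d+1) th" and "j \<le> d"
  shows "is_eigenvalue (d+1) X (th j)"
proof -
  have "j < d+1" using \<open>j \<le> d\<close> by simp
  then show ?thesis
    unfolding is_eigenvalue_def
    using col_nonzero_if_invertible[OF assms(3) U] eigenvector_if_mult_mat_diag[OF assms(1,2,4)]
      col_carrier_vec[OF _ U]
    by blast
qed

lemma prim_idem_mult_eigenbasis:
  fixes X U :: "'a::field mat"
  assumes X: "X \<in> carrier_mat (d+1) (d+1)" and U: "U \<in> carrier_mat (d+1) (d+1)"
    and XU: "X * U = U * mat_diag (d+1) th" and dist: "\<forall>i\<le>d. \<forall>j\<le>d. i \<noteq> j \<longrightarrow> th i \<noteq> th j"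
    and i: "i \<le> d"
  shows "prim_idem d X th i * U = U * mat_diag (d+1) (\<lambda>l. if l = i then 1 else 0)"
proof (rule mat_col_eqI)
  fix l assume "l < dim_col (U * mat_diag (d+1) (\<lambda>l. if l = i then 1 else 0))"
  then have l: "l \<le> d" by (simp add: mat_diag_def)
  then have l': "l < d+1" by simp
  have "col (prim_idem d X th i * U) l = prim_idem d X th i *\<^sub>v col U l"
    by (rule col_mult2[OF prim_idem_carrier[OF X] U l'])
  also have "\<dots> = (if l = i then col U l else 0\<^sub>v (d+1))"
    by (rule prim_idem_mult_eigenvector[OF X col_carrier_vec[OF l' U]
          eigenvector_if_mult_mat_diag[OF X U XU l'] l i dist])
  also have "\<dots> = col (U * mat_diag (d+1) (\<lambda>l. if l = i then 1 else 0)) l"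
    unfolding col_mult_mat_diag[OF U l'] using U l' by (auto intro!: eq_vecI)
  finally show "col (prim_idem d X th i * U) l = col (U * mat_diag (d+1) (\<lambda>l. if l = i then 1 else 0)) l" .
qed (use U prim_idem_carrier[OF X] in \<open>auto simp: mat_diag_def\<close>)

text \<open>In an eigenbasis of X, the primitive idempotents of X cut out the single entry (i, j) of the
  matrix T of Y.\<close>
lemma prim_idem_sandwich_eq_zero_iff:
  fixes X Y U T :: "'a::field mat"
  assumes X: "X \<in> carrier_mat (d+1) (d+1)" and Y: "Y \<in> carrier_mat (d+1) (d+1)"
    and U: "U \<in> carrier_mat (d+1) (d+1)" and T: "T \<in> carrier_mat (d+1) (d+1)"
    and inv: "invertible_mat U" and XU: "X * U = U * mat_diag (d+1) th" and YU: "Y * U = U * T"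
    and dist: "\<forall>i\<le>d. \<forall>j\<le>d. i \<noteq> j \<longrightarrow> th i \<noteq> th j" and i: "i \<le> d" and j: "j \<le> d"
  shows "prim_idem d X th i * Y * prim_idem d X th j = 0\<^sub>m (d+1) (d+1) \<longleftrightarrow> T $$ (i, j) = 0"
proof -
  let ?E = "prim_idem d X th" and ?D = "\<lambda>l. mat_diag (d+1) (\<lambda>k. if k = l then 1 else (0::'a))"
  let ?M = "?D i * T * ?D j"
  have E: "\<And>l. ?E l \<in> carrier_mat (d+1) (d+1)" using prim_idem_carrier[OF X] .
  have D: "\<And>l. ?D l \<in> carrier_mat (d+1) (d+1)" by simp
  have M: "?M = mat (d+1) (d+1) (\<lambda>(k, l). if k = i \<and> l = j then T $$ (i, j) else 0)"
    unfolding mat_diag_mult_left[OF T]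
    by (subst mat_diag_mult_right[of _ "d+1"]) (auto intro!: eq_matI)
  have "?E i * Y * ?E j * U = ?E i * Y * (?E j * U)"
    by (rule assoc_mult_mat) (use E Y U in auto)
  also have "\<dots> = ?E i * Y * (U * ?D j)"
    unfolding prim_idem_mult_eigenbasis[OF X U XU dist j] ..
  also have "\<dots> = ?E i * (Y * U) * ?D j"
    using assoc_mult_mat[OF E Y U] assoc_mult_mat[OF mult_carrier_mat[OF E Y] U D]
    by simp
  also have "\<dots> = ?E i * U * T * ?D j"
    unfolding YU assoc_mult_mat[OF E U T, symmetric] ..
  also have "\<dots> = U * ?D i * T * ?D j"
    unfolding prim_idem_mult_eigenbasis[OF X U XU dist i] ..
  also have "\<dots> = U * ?M"
    using assoc_mult_mat[OF U D T] assoc_mult_mat[OF U mult_carrier_mat[OF D T] D] by simp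
  finally have EYE: "?E i * Y * ?E j * U = U * ?M" .
  have "?E i * Y * ?E j = 0\<^sub>m (d+1) (d+1) \<longleftrightarrow> ?M = 0\<^sub>m (d+1) (d+1)"
    by (rule intertwined_eq_zero_iff[OF mult_carrier_mat[OF mult_carrier_mat[OF E Y] E]
          mult_carrier_mat[OF mult_carrier_mat[OF D T] D] U inv EYE])
  also have "\<dots> \<longleftrightarrow> T $$ (i, j) = 0"
    unfolding M using i j by (auto simp: mat_eq_iff)
  finally show ?thesis .
qed

lemma diagonal_mat_diag: "diagonal_mat (mat_diag n f)"
  by (simp add: diagonal_mat_def mat_diag_def)

lemma leonard_pair_if_bases:
  assumes "A \<in> carrier_mat (d+1) (d+1)" and "As \<in> carrier_mat (d+1) (d+1)"
    and "P \<in> carrier_mat (d+1) (d+1)" and "invertible_mat P"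
    and "A * P = P * M" and "As * P = P * mat_diag (d+1) ths" and "irred_tridiag (d+1) M"
    and "Q \<in> carrier_mat (d+1) (d+1)" and "invertible_mat Q"
    and "As * Q = Q * N" and "A * Q = Q * mat_diag (d+1) th" and "irred_tridiag (d+1) N"
  shows "leonard_pair d A As"
  unfolding leonard_pair_def using assms by (blast intro: mat_diag_dim diagonal_mat_diag)

lemma leonard_system_if_bases:
  fixes A As :: "'a::field mat"
  assumes A: "A \<in> carrier_mat (d+1) (d+1)" and As: "As \<in> carrier_mat (d+1) (d+1)"
    and P: "P \<in> carrier_mat (d+1) (d+1)" "invertible_mat P"
    and AP: "A * P = P * M" and AsP: "As * P = P * mat_diag (d+1) ths" and M: "irred_tridiag (d+1) M"
    and Q: "Q \<in> carrier_mat (d+1) (d+1)" "invertible_mat Q"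
    and AsQ: "As * Q = Q * N" and AQ: "A * Q = Q * mat_diag (d+1) th" and N: "irred_tridiag (d+1) N"
    and dist: "\<forall>i\<le>d. \<forall>j\<le>d. i \<noteq> j \<longrightarrow> th i \<noteq> th j"
    and dists: "\<forall>i\<le>d. \<forall>j\<le>d. i \<noteq> j \<longrightarrow> ths i \<noteq> ths j"
  shows "leonard_system d A th (prim_idem d A th) As ths (prim_idem d As ths)"
proof -
  have Mc: "M \<in> carrier_mat (d+1) (d+1)" and Nc: "N \<in> carrier_mat (d+1) (d+1)"
    using M N by (simp_all add: irred_tridiag_def)
  have E: "prim_idem d A th i * As * prim_idem d A th j = 0\<^sub>m (d+1) (d+1) \<longleftrightarrow> N $$ (i, j) = 0"
    if "i \<le> d" "j \<le> d" for i j
    by (rule prim_idem_sandwich_eq_zero_iff[OF A As Q(1) Nc Q(2) AQ AsQ dist that])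
  have Es: "prim_idem d As ths i * A * prim_idem d As ths j = 0\<^sub>m (d+1) (d+1) \<longleftrightarrow> M $$ (i, j) = 0"
    if "i \<le> d" "j \<le> d" for i j
    by (rule prim_idem_sandwich_eq_zero_iff[OF As A P(1) Mc P(2) AsP AP dists that])
  show ?thesis
    unfolding leonard_system_def
  proof (intro conjI allI impI A As dist dists refl)
    show "is_eigenvalue (d+1) A (th i)" if "i \<le> d" for i
      by (rule is_eigenvalue_if_mult_mat_diag[OF A Q(1,2) AQ that])
    show "is_eigenvalue (d+1) As (ths i)" if "i \<le> d" for i
      by (rule is_eigenvalue_if_mult_mat_diag[OF As P(1,2) AsP that])
  next
    fix i j assume "i \<le> d" "j \<le> d" "i + 1 < j \<or> j + 1 < i"
    then show "prim_idem d A th i * As * prim_idem d A th j = 0\<^sub>m (d+1) (d+1)"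
      and "prim_idem d As ths i * A * prim_idem d As ths j = 0\<^sub>m (d+1) (d+1)"
      using E Es M N by (auto simp: irred_tridiag_def)
  next
    fix i j assume "i \<le> d" "j \<le> d" "i = j + 1 \<or> j = i + 1"
    then show "prim_idem d A th i * As * prim_idem d A th j \<noteq> 0\<^sub>m (d+1) (d+1)"
      and "prim_idem d As ths i * A * prim_idem d As ths j \<noteq> 0\<^sub>m (d+1) (d+1)"
      using E Es M N by (auto simp: irred_tridiag_def)
  qed (use dist dists in blast)+
qed

text \<open>The split basis is u_i rescaled by c_0 ... c_(i-1), which turns the step relation into
  u_(i+1) = (A - th_i) u_i and multiplies the subdiagonal coefficients of As by c_(j-1).\<close>
lemma first_split_if_basis:
  fixes A As :: "'a::field mat"
  assumes A: "A \<in> carrier_mat (d+1) (d+1)" and As: "As \<in> carrier_mat (d+1) (d+1)"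
    and u: "\<And>j. u j \<in> carrier_vec (d+1)" and inv: "invertible_mat (basis_mat d u)"
    and step: "\<And>i. i < d \<Longrightarrow> (A - th i \<cdot>\<^sub>m 1\<^sub>m (d+1)) *\<^sub>v u i = c i \<cdot>\<^sub>v u (i + 1)"
    and c: "\<And>i. i < d \<Longrightarrow> c i \<noteq> 0"
    and act: "acts_tridiag d As u ths psi (\<lambda>_. 0)"
    and phi: "\<And>j. 0 < j \<Longrightarrow> j \<le> d \<Longrightarrow> phi j = psi j * c (j - 1)"
    and dist: "\<forall>i\<le>d. \<forall>j\<le>d. i \<noteq> j \<longrightarrow> ths i \<noteq> ths j"
  shows "first_split d A th As ths phi"
proof -
  define k where "k i = (\<Prod>l<i. c l)" for i
  define v where "v i = k i \<cdot>\<^sub>v u i" for i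
  have k_Suc: "k (Suc i) = k i * c i" for i by (simp add: k_def)
  have k: "k i \<noteq> 0" if "i \<le> d" for i using c that by (simp add: k_def)
  have v: "v i \<in> carrier_vec (d+1)" for i using u by (simp add: v_def)
  have v0: "v 0 = u 0" using u by (simp add: v_def k_def)
  have split: "split_vec d A th (u 0) i = v i" if "i \<le> d" for i
    using that
  proof (induction i)
    case 0
    then show ?case by (simp add: split_vec_def v0)
  next
    case (Suc i)
    have "split_vec d A th (u 0) (Suc i) = (A - th i \<cdot>\<^sub>m 1\<^sub>m (d+1)) *\<^sub>v v i"
      using Suc by (simp add: split_vec_def)
    also have "\<dots> = k i \<cdot>\<^sub>v ((A - th i \<cdot>\<^sub>m 1\<^sub>m (d+1)) *\<^sub>v u i)"
      unfolding v_def by (rule mult_mat_vec[OF minus_carrier_mat[OF smult_carrier_mat[OF one_carrier_mat]] u])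
    also have "\<dots> = k i \<cdot>\<^sub>v (c i \<cdot>\<^sub>v u (i + 1))"
      using step Suc.prems by simp
    finally show ?case using u by (simp add: v_def k_Suc smult_smult_assoc)
  qed
  have U: "mat_of_cols (d+1) (map (split_vec d A th (u 0)) [0..<d+1]) = basis_mat d v"
    unfolding mat_of_cols_eq_basis_mat[symmetric] using split by (intro arg_cong[where f = "mat_of_cols (d+1)"]) auto
  have inv_v: "invertible_mat (basis_mat d v)"
  proof -
    have "det (basis_mat d v) = det (basis_mat d u) * det (mat_diag (d+1) k)"
      unfolding v_def basis_mat_scale[OF u] by (rule det_mult) auto
    moreover have "det (basis_mat d u) \<noteq> 0" "det (mat_diag (d+1) k) \<noteq> 0"
      using inv invertible_mat_diag[of "d+1" k] k
      by (auto simp: invertible_mat_iff_det_nonzero[OF basis_mat_carrier]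
          invertible_mat_iff_det_nonzero[OF mat_diag_dim])
    ultimately show ?thesis by (simp add: invertible_mat_iff_det_nonzero[OF basis_mat_carrier])
  qed
  have act_v: "acts_tridiag d As v ths (\<lambda>j. psi j * c (j - 1)) (\<lambda>_. 0)"
    unfolding acts_tridiag_def
  proof (intro conjI allI impI)
    show "psi 0 * c (0 - 1) = 0" using act by (simp add: acts_tridiag_def)
  next
    fix j assume j: "j \<le> d"
    have "As *\<^sub>v v j = k j \<cdot>\<^sub>v (ths j \<cdot>\<^sub>v u j + psi j \<cdot>\<^sub>v u (j - 1) + 0 \<cdot>\<^sub>v u (j + 1))"
      using act j u As by (simp add: acts_tridiag_def v_def mult_mat_vec)
    also have "\<dots> = ths j \<cdot>\<^sub>v v j + (psi j * c (j - 1)) \<cdot>\<^sub>v v (j - 1) + 0 \<cdot>\<^sub>v v (j + 1)"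
    proof (cases j)
      case 0
      then show ?thesis
        using act u[THEN carrier_vecD] by (auto simp: acts_tridiag_def v_def algebra_simps intro!: eq_vecI)
    next
      case (Suc i)
      then show ?thesis
        using u[THEN carrier_vecD] by (auto simp: v_def k_Suc algebra_simps intro!: eq_vecI)
    qed
    finally show "As *\<^sub>v v j = ths j \<cdot>\<^sub>v v j + (psi j * c (j - 1)) \<cdot>\<^sub>v v (j - 1) + 0 \<cdot>\<^sub>v v (j + 1)" .
  qed simp
  have B: "tridiag_mat d ths (\<lambda>j. psi j * c (j - 1)) (\<lambda>_. 0)
      = mat (d+1) (d+1) (\<lambda>(i, j). if i = j then ths i else if j = i + 1 then phi j else 0)"
    using phi by (auto simp: tridiag_mat_def intro!: eq_matI)
  have "As *\<^sub>v u 0 = ths 0 \<cdot>\<^sub>v u 0"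
    using act u[THEN carrier_vecD] by (auto simp: acts_tridiag_def intro!: eq_vecI)
  then have eigen: "prim_idem d As ths 0 *\<^sub>v u 0 = u 0"
    using prim_idem_mult_eigenvector[OF As u _ _ _ dist, of 0 0] by simp
  have nz: "u 0 \<noteq> 0\<^sub>v (d+1)"
    using col_nonzero_if_invertible[OF inv basis_mat_carrier, of 0] col_basis_mat[OF _ u, of 0] by simp
  show ?thesis
    unfolding first_split_def Let_def
    by (rule bexI[of _ "u 0"], unfold eigen U B[symmetric])
       (use nz inv_v mult_basis_mat_tridiag[OF As v act_v] u in auto)
qed

section \<open>The sl2 operators on polynomials\<close>

lemma of_nat_nonzero_if_char:
  assumes "CHAR('a::semiring_1) = 0 \<or> d < CHAR('a)" and "0 < k" and "k \<le> d"
  shows "(of_nat k :: 'a) \<noteq> 0"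
proof
  assume "(of_nat k :: 'a) = 0"
  then have "CHAR('a) dvd k" by (simp add: of_nat_eq_0_iff_char_dvd)
  then show False using assms by (auto dest: dvd_imp_le)
qed

lemma fact_nonzero_if_char:
  assumes "CHAR('a::field) = 0 \<or> d < CHAR('a)" and "k \<le> d"
  shows "(of_nat (fact k) :: 'a) \<noteq> 0"
  using assms(2)
proof (induction k)
  case (Suc k)
  have "(of_nat (fact (Suc k)) :: 'a) = of_nat (Suc k) * of_nat (fact k)"
    by (metis fact_Suc of_nat_id of_nat_mult)
  then show ?case using Suc of_nat_nonzero_if_char[OF assms(1), of "Suc k"] by simp
qed simp

text \<open>The weight (d - j)! on x^j is what makes sl2_mat, with subdiagonal \<alpha> and superdiagonal
  \<beta> j (d - j + 1), the matrix of sl2_op.\<close>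
definition poly_vec :: "nat \<Rightarrow> 'a::field poly \<Rightarrow> 'a vec" where
  "poly_vec d f = vec (d+1) (\<lambda>j. of_nat (fact (d - j)) * coeff f j)"

lemma poly_vec_carrier [simp]: "poly_vec d f \<in> carrier_vec (d+1)"
  by (simp add: poly_vec_def)

lemma poly_vec_add: "poly_vec d (f + g) = poly_vec d f + poly_vec d g"
  by (rule eq_vecI) (auto simp: poly_vec_def algebra_simps)

lemma poly_vec_smult: "poly_vec d (smult c f) = c \<cdot>\<^sub>v poly_vec d f"
  by (rule eq_vecI) (auto simp: poly_vec_def)

definition sl2_op :: "nat \<Rightarrow> 'a::field \<Rightarrow> 'a \<Rightarrow> 'a \<Rightarrow> 'a poly \<Rightarrow> 'a poly" where
  "sl2_op d \<alpha> \<beta> \<gamma> f = smult \<alpha> (smult (of_nat d) (pCons 0 f) - pCons 0 (pCons 0 (pderiv f)))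
     + smult \<beta> (pderiv f) + smult \<gamma> f"

definition sl2_mat :: "nat \<Rightarrow> 'a::field \<Rightarrow> 'a \<Rightarrow> 'a \<Rightarrow> 'a mat" where
  "sl2_mat d \<alpha> \<beta> \<gamma> = mat (d+1) (d+1) (\<lambda>(i, j). if i = j then \<gamma> else if i = j + 1 then \<alpha>
      else if j = i + 1 then \<beta> * of_nat (j * (d - j + 1)) else 0)"

lemma sl2_mat_carrier [simp]: "sl2_mat d \<alpha> \<beta> \<gamma> \<in> carrier_mat (d+1) (d+1)"
  by (simp add: sl2_mat_def)

lemma sl2_mat_minus_smult_one: "sl2_mat d \<alpha> \<beta> \<gamma> - t \<cdot>\<^sub>m 1\<^sub>m (d+1) = sl2_mat d \<alpha> \<beta> (\<gamma> - t)"
  by (rule eq_matI) (auto simp: sl2_mat_def)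

lemma coeff_sl2_op:
  "coeff (sl2_op d \<alpha> \<beta> \<gamma> f) i = \<gamma> * coeff f i
     + (if i = 0 then 0 else \<alpha> * (of_nat d - of_nat i + 1) * coeff f (i - 1))
     + \<beta> * of_nat (i + 1) * coeff f (i + 1)"
  by (cases i; cases "i - 1") (auto simp: sl2_op_def coeff_pderiv algebra_simps)

lemma sl2_mat_mult_vec_index:
  assumes v: "v \<in> carrier_vec (d+1)" and i: "i \<le> d"
  shows "(sl2_mat d \<alpha> \<beta> \<gamma> *\<^sub>v v) $ i = \<gamma> * v $ i + (if i = 0 then 0 else \<alpha> * v $ (i - 1))
    + (if i < d then \<beta> * of_nat ((i + 1) * (d - i)) * v $ (i + 1) else 0)"
proof -
  have "(sl2_mat d \<alpha> \<beta> \<gamma> *\<^sub>v v) $ i = (\<Sum>j<d+1. (if i = j then \<gamma> else if i = j + 1 then \<alpha>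
      else if j = i + 1 then \<beta> * of_nat (j * (d - j + 1)) else 0) * v $ j)"
    using v i by (simp add: sl2_mat_def scalar_prod_def row_def lessThan_atLeast0)
  also have "\<dots> = (\<Sum>j<d+1. if j = i then \<gamma> * v $ j else 0)
      + (\<Sum>j<d+1. if j = i - 1 \<and> 0 < i then \<alpha> * v $ j else 0)
      + (\<Sum>j<d+1. if j = i + 1 then \<beta> * of_nat ((i + 1) * (d - i)) * v $ j else 0)"
    unfolding sum.distrib[symmetric] by (rule sum.cong) (auto simp: Suc_diff_Suc)
  also have "\<dots> = \<gamma> * v $ i + (if i = 0 then 0 else \<alpha> * v $ (i - 1))
      + (if i < d then \<beta> * of_nat ((i + 1) * (d - i)) * v $ (i + 1) else 0)"
    using i by (auto simp: sum.delta)
  finally show ?thesis .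
qed

lemma sl2_mat_mult_poly_vec:
  assumes deg: "degree f \<le> d"
  shows "sl2_mat d \<alpha> \<beta> \<gamma> *\<^sub>v poly_vec d f = poly_vec d (sl2_op d \<alpha> \<beta> \<gamma> f)"
proof (rule eq_vecI)
  fix i assume "i < dim_vec (poly_vec d (sl2_op d \<alpha> \<beta> \<gamma> f))"
  then have i: "i \<le> d" by (simp add: poly_vec_def)
  let ?F = "\<lambda>j. of_nat (fact (d - j)) :: 'a"
  have low: "(if i = 0 then 0 else \<alpha> * (?F (i - 1) * coeff f (i - 1)))
      = ?F i * (if i = 0 then 0 else \<alpha> * (of_nat d - of_nat i + 1) * coeff f (i - 1))"
  proof (cases "i = 0")
    case False
    then have "d - (i - 1) = Suc (d - i)" using i by simp
    then have "?F (i - 1) = of_nat (Suc (d - i)) * ?F i"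
      by (metis fact_Suc of_nat_id of_nat_mult)
    also have "of_nat (Suc (d - i)) = (of_nat d - of_nat i + 1 :: 'a)"
      using i by (simp add: of_nat_diff)
    finally have F: "?F (i - 1) = (of_nat d - of_nat i + 1) * ?F i" .
    show ?thesis unfolding F using False by (simp add: algebra_simps)
  qed simp
  have high: "(if i < d then \<beta> * of_nat ((i + 1) * (d - i)) * (?F (i + 1) * coeff f (i + 1)) else 0)
      = ?F i * (\<beta> * of_nat (i + 1) * coeff f (i + 1))"
  proof (cases "i < d")
    case True
    then have "d - i = Suc (d - (i + 1))" by simp
    then have F: "?F i = of_nat (d - i) * ?F (i + 1)"
      by (metis fact_Suc of_nat_id of_nat_mult)
    show ?thesis unfolding F of_nat_mult using True by (simp only: if_True ac_simps)
  next
    case False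
    then have "i = d" using i by simp
    then show ?thesis using deg by (simp add: coeff_eq_0)
  qed
  have "(sl2_mat d \<alpha> \<beta> \<gamma> *\<^sub>v poly_vec d f) $ i = \<gamma> * (?F i * coeff f i)
      + (if i = 0 then 0 else \<alpha> * (?F (i - 1) * coeff f (i - 1)))
      + (if i < d then \<beta> * of_nat ((i + 1) * (d - i)) * (?F (i + 1) * coeff f (i + 1)) else 0)"
    unfolding sl2_mat_mult_vec_index[OF poly_vec_carrier i] using i by (auto simp: poly_vec_def Suc_diff_le)
  also have "\<dots> = ?F i * coeff (sl2_op d \<alpha> \<beta> \<gamma> f) i"
    unfolding low high coeff_sl2_op by (simp add: algebra_simps)
  also have "\<dots> = poly_vec d (sl2_op d \<alpha> \<beta> \<gamma> f) $ i"
    using i by (simp add: poly_vec_def)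
  finally show "(sl2_mat d \<alpha> \<beta> \<gamma> *\<^sub>v poly_vec d f) $ i = poly_vec d (sl2_op d \<alpha> \<beta> \<gamma> f) $ i" .
qed (simp add: poly_vec_def sl2_mat_def)

section \<open>The bases (1 + a x)^(d-i) (1 + b x)^i\<close>

definition binom_basis :: "nat \<Rightarrow> 'a::field \<Rightarrow> 'a \<Rightarrow> nat \<Rightarrow> 'a poly" where
  "binom_basis d a b i = [:1, a:] ^ (d - i) * [:1, b:] ^ i"

lemma degree_binom_basis:
  assumes "i \<le> d"
  shows "degree (binom_basis d a b i) \<le> d"
proof -
  have "degree (binom_basis d a b i) \<le> degree ([:1, a:] ^ (d - i)) + degree ([:1, b:] ^ i)"
    unfolding binom_basis_def by (rule degree_mult_le)
  also have "\<dots> \<le> degree [:1, a:] * (d - i) + degree [:1, b:] * i"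
    by (intro add_mono degree_power_le)
  also have "\<dots> \<le> 1 * (d - i) + 1 * i" by (intro add_mono mult_right_mono) auto
  finally show ?thesis using assms by simp
qed

lemma linear_mult_pderiv_power:
  "[:1, a:] * pderiv ([:1, a:] ^ m) = smult (of_nat m * a) ([:1, a:] ^ m :: 'a::field poly)"
proof (cases m)
  case (Suc n)
  show ?thesis unfolding Suc pderiv_power_Suc by (simp add: pderiv_pCons algebra_simps)
qed simp

lemma linear_mult_sl2_op_powers:
  fixes a b :: "'a::field"
  assumes "m + n = d"
  shows "[:1, a:] * [:1, b:] * sl2_op d \<alpha> \<beta> \<gamma> ([:1, a:] ^ m * [:1, b:] ^ n)
    = [: \<beta> * (of_nat m * a + of_nat n * b) + \<gamma>, of_nat d * (\<alpha> + \<beta> * a * b) + \<gamma> * (a + b),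
         \<alpha> * (of_nat m * b + of_nat n * a) + \<gamma> * a * b :] * ([:1, a:] ^ m * [:1, b:] ^ n)"
proof -
  let ?p = "[:1, a:]" and ?q = "[:1, b:]" and ?f = "[:1, a:] ^ m * [:1, b:] ^ n"
  let ?R = "smult (of_nat m * a) ?q + smult (of_nat n * b) ?p"
  have deriv: "?p * ?q * pderiv ?f = ?R * ?f"
  proof -
    have "?p * ?q * pderiv ?f = ?p ^ m * ?p * (?q * pderiv (?q ^ n)) + ?q ^ n * ?q * (?p * pderiv (?p ^ m))"
      by (simp add: pderiv_mult algebra_simps smult_add_left)
    also have "\<dots> = ?R * ?f"
      unfolding linear_mult_pderiv_power by (simp add: algebra_simps smult_add_left)
    finally show ?thesis .
  qed
  have pc: "X * pCons 0 Y = pCons 0 (X * Y)" for X Y :: "'a poly"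
    by (simp add: mult_pCons_right)
  have "?p * ?q * sl2_op d \<alpha> \<beta> \<gamma> ?f = smult \<alpha> (smult (of_nat d) (pCons 0 (?p * ?q * ?f))
      - pCons 0 (pCons 0 (?p * ?q * pderiv ?f))) + smult \<beta> (?p * ?q * pderiv ?f) + smult \<gamma> (?p * ?q * ?f)"
    unfolding sl2_op_def by (simp only: pc ring_distribs mult_smult_right)
  also have "\<dots> = (smult \<alpha> (smult (of_nat d) (pCons 0 (?p * ?q)) - pCons 0 (pCons 0 ?R))
      + smult \<beta> ?R + smult \<gamma> (?p * ?q)) * ?f"
    unfolding deriv
    by (simp only: mult_pCons_left smult_0_left add_0_left ring_distribs mult_smult_left
        smult_diff_right mult.assoc)
  also have "smult \<alpha> (smult (of_nat d) (pCons 0 (?p * ?q)) - pCons 0 (pCons 0 ?R))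
      + smult \<beta> ?R + smult \<gamma> (?p * ?q)
    = [: \<beta> * (of_nat m * a + of_nat n * b) + \<gamma>, of_nat d * (\<alpha> + \<beta> * a * b) + \<gamma> * (a + b),
         \<alpha> * (of_nat m * b + of_nat n * a) + \<gamma> * a * b :]"
    using assms[symmetric] by (simp add: algebra_simps)
  finally show ?thesis .
qed

lemma binom_quadratic_expansion:
  fixes a b m n \<alpha> \<beta> \<gamma> :: "'a::field"
  assumes "a \<noteq> b"
  shows "[: \<beta> * (m * a + n * b) + \<gamma>, (m + n) * (\<alpha> + \<beta> * a * b) + \<gamma> * (a + b),
            \<alpha> * (m * b + n * a) + \<gamma> * a * b :]
    = smult (\<gamma> + (m - n) * (\<alpha> - \<beta> * a * b) / (a - b)) ([:1, a:] * [:1, b:])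
      + smult (n * (\<alpha> - \<beta> * b ^ 2) / (a - b)) ([:1, a:] * [:1, a:])
      + smult (m * (\<beta> * a ^ 2 - \<alpha>) / (a - b)) ([:1, b:] * [:1, b:])"
proof -
  define e where "e = a - b"
  then have a: "a = b + e" and e: "e \<noteq> 0" using assms by simp_all
  show ?thesis unfolding e_def[symmetric] unfolding a
    using e by (simp add: field_simps power2_eq_square)
qed

text \<open>Multiplied by (1 + a x)(1 + b x), the sl2 operator on the basis (1 + a x)^(d-i) (1 + b x)^i
  becomes multiplication by a quadratic, which is expanded in the basis (1 + a x)(1 + b x),
  (1 + a x)^2, (1 + b x)^2 of quadratics.\<close>
lemma sl2_op_binom_basis:
  fixes a b :: "'a::field"
  assumes ab: "a \<noteq> b" and i: "i \<le> d"
  shows "sl2_op d \<alpha> \<beta> \<gamma> (binom_basis d a b i)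
    = smult (\<gamma> + (of_nat d - 2 * of_nat i) * (\<alpha> - \<beta> * a * b) / (a - b)) (binom_basis d a b i)
      + smult (of_nat i * (\<alpha> - \<beta> * b ^ 2) / (a - b)) (binom_basis d a b (i - 1))
      + smult (of_nat (d - i) * (\<beta> * a ^ 2 - \<alpha>) / (a - b)) (binom_basis d a b (i + 1))"
    (is "_ = smult ?x0 _ + smult ?x1 _ + smult ?x2 _")
proof -
  let ?p = "[:1, a:]" and ?q = "[:1, b:]" and ?f = "binom_basis d a b"
  have pq: "?p * ?q \<noteq> 0" by simp
  have "of_nat (d - i) + of_nat i = (of_nat d :: 'a)" "of_nat (d - i) - of_nat i = (of_nat d - 2 * of_nat i :: 'a)"
    using i by (simp_all add: of_nat_diff)
  then have quadratic: "[: \<beta> * (of_nat (d - i) * a + of_nat i * b) + \<gamma>,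
      of_nat d * (\<alpha> + \<beta> * a * b) + \<gamma> * (a + b), \<alpha> * (of_nat (d - i) * b + of_nat i * a) + \<gamma> * a * b :]
    = smult ?x0 (?p * ?q) + smult ?x1 (?p * ?p) + smult ?x2 (?q * ?q)"
    using binom_quadratic_expansion[OF ab, of \<beta> "of_nat (d - i)" "of_nat i" \<gamma> \<alpha>] by simp
  have down: "smult ?x1 (?p * ?p) * ?f i = ?p * ?q * smult ?x1 (?f (i - 1))"
  proof (cases "i = 0")
    case False
    then have "d - (i - 1) = Suc (d - i)" and "i = Suc (i - 1)" using i by simp_all
    then have "?f i = ?p ^ (d - i) * (?q * ?q ^ (i - 1))" "?f (i - 1) = ?p * ?p ^ (d - i) * ?q ^ (i - 1)"
      unfolding binom_basis_def by (metis power_Suc, simp)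
    then show ?thesis by (simp only: mult_smult_left mult_smult_right ac_simps)
  qed simp
  have up: "smult ?x2 (?q * ?q) * ?f i = ?p * ?q * smult ?x2 (?f (i + 1))"
  proof (cases "i = d")
    case False
    then have "d - i = Suc (d - (i + 1))" using i by simp
    then have "?f i = ?p * ?p ^ (d - (i + 1)) * ?q ^ i" "?f (i + 1) = ?p ^ (d - (i + 1)) * (?q * ?q ^ i)"
      unfolding binom_basis_def by simp_all
    then show ?thesis by (simp only: mult_smult_left mult_smult_right ac_simps)
  qed simp
  have "?p * ?q * sl2_op d \<alpha> \<beta> \<gamma> (?f i)
      = (smult ?x0 (?p * ?q) + smult ?x1 (?p * ?p) + smult ?x2 (?q * ?q)) * ?f i"
    unfolding quadratic[symmetric] binom_basis_def
    by (rule linear_mult_sl2_op_powers) (use i in simp)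
  also have "\<dots> = smult ?x0 (?p * ?q) * ?f i + smult ?x1 (?p * ?p) * ?f i + smult ?x2 (?q * ?q) * ?f i"
    by (simp only: distrib_right)
  also have "\<dots> = ?p * ?q * (smult ?x0 (?f i) + smult ?x1 (?f (i - 1)) + smult ?x2 (?f (i + 1)))"
    unfolding down up distrib_left by (simp only: mult_smult_left mult_smult_right)
  finally show ?thesis using mult_left_cancel[OF pq] by blast
qed

lemma sl2_mat_acts_binom_basis:
  fixes a b :: "'a::field"
  assumes "a \<noteq> b"
  shows "acts_tridiag d (sl2_mat d \<alpha> \<beta> \<gamma>) (\<lambda>i. poly_vec d (binom_basis d a b i))
    (\<lambda>i. \<gamma> + (of_nat d - 2 * of_nat i) * (\<alpha> - \<beta> * a * b) / (a - b))
    (\<lambda>i. of_nat i * (\<alpha> - \<beta> * b ^ 2) / (a - b))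
    (\<lambda>i. of_nat (d - i) * (\<beta> * a ^ 2 - \<alpha>) / (a - b))"
  unfolding acts_tridiag_def
  by (auto simp: sl2_mat_mult_poly_vec[OF degree_binom_basis] sl2_op_binom_basis[OF assms]
      poly_vec_add poly_vec_smult)

text \<open>For degree f \<le> m, shear m c f = (1 + c x)^m f (x / (1 + c x)): the substitution
  (X, Y) \<mapsto> (X, Y + c X) on binary forms of degree m, dehomogenised at Y = 1.\<close>
definition shear :: "nat \<Rightarrow> 'a::field \<Rightarrow> 'a poly \<Rightarrow> 'a poly" where
  "shear m c f = (\<Sum>j\<le>m. smult (coeff f j) (monom 1 j * [:1, c:] ^ (m - j)))"

lemma shear_add: "shear m c (f + g) = shear m c f + shear m c g"
  by (simp add: shear_def smult_add_left sum.distrib)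

lemma shear_smult: "shear m c (smult a f) = smult a (shear m c f)"
proof -
  have "smult a (sum g A) = (\<Sum>x\<in>A. smult a (g x))" for g :: "nat \<Rightarrow> 'a poly" and A
    by (induction A rule: infinite_finite_induct) (auto simp: smult_add_right)
  then show ?thesis by (simp add: shear_def)
qed

lemma shear_Suc:
  assumes "degree f \<le> m"
  shows "shear (Suc m) c f = [:1, c:] * shear m c f"
proof -
  have "shear (Suc m) c f = (\<Sum>j\<le>m. smult (coeff f j) (monom 1 j * [:1, c:] ^ (Suc m - j)))"
    unfolding shear_def using assms by (simp add: coeff_eq_0)
  also have "\<dots> = (\<Sum>j\<le>m. [:1, c:] * smult (coeff f j) (monom 1 j * [:1, c:] ^ (m - j)))"
    by (rule sum.cong) (auto simp: Suc_diff_le ac_simps)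
  also have "\<dots> = [:1, c:] * shear m c f" unfolding shear_def by (simp add: sum_distrib_left)
  finally show ?thesis .
qed

lemma shear_Suc_pCons: "shear (Suc m) c (pCons 0 f) = pCons 0 (shear m c f)"
proof -
  have "shear (Suc m) c (pCons 0 f) = (\<Sum>j\<le>m. smult (coeff f j) (monom 1 (Suc j) * [:1, c:] ^ (m - j)))"
    unfolding shear_def sum.atMost_Suc_shift by simp
  also have "\<dots> = (\<Sum>j\<le>m. monom 1 1 * smult (coeff f j) (monom 1 j * [:1, c:] ^ (m - j)))"
  proof (rule sum.cong)
    show "smult (coeff f j) (monom 1 (Suc j) * [:1, c:] ^ (m - j))
      = monom 1 1 * smult (coeff f j) (monom 1 j * [:1, c:] ^ (m - j))" for j
      using mult_monom[of "1::'a" j 1 1] by (simp add: mult.assoc[symmetric] mult.commute)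
  qed simp
  also have "\<dots> = monom 1 1 * shear m c f" unfolding shear_def by (simp add: sum_distrib_left)
  also have "\<dots> = pCons 0 (shear m c f)" by (simp add: monom_Suc mult_pCons_left)
  finally show ?thesis .
qed

lemma shear_Suc_linear_mult:
  assumes "degree f \<le> m"
  shows "shear (Suc m) c ([:1, a:] * f) = [:1, a + c:] * shear m c f"
proof -
  have "[:1, a:] * f = f + pCons 0 (smult a f)" by (simp add: mult_pCons_left)
  then have "shear (Suc m) c ([:1, a:] * f) = [:1, c:] * shear m c f + pCons 0 (smult a (shear m c f))"
    using assms by (simp add: shear_add shear_Suc shear_Suc_pCons shear_smult)
  also have "\<dots> = [:1, a + c:] * shear m c f"
    by (simp add: mult_pCons_left algebra_simps smult_add_left)
  finally show ?thesis .
qed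

lemma shear_linear_power_mult:
  assumes "shear k c f = g" and deg: "degree f \<le> k"
  shows "shear (k + r) c ([:1, a:] ^ r * f) = [:1, a + c:] ^ r * g"
proof (induction r)
  case 0
  then show ?case using assms by simp
next
  case (Suc r)
  have "degree ([:1, a:] ^ r * f) \<le> degree ([:1, a:] ^ r) + degree f" by (rule degree_mult_le)
  also have "\<dots> \<le> degree [:1, a:] * r + k" by (intro add_mono degree_power_le deg)
  also have "\<dots> \<le> k + r" by simp
  finally have "shear (Suc (k + r)) c ([:1, a:] * ([:1, a:] ^ r * f))
      = [:1, a + c:] * shear (k + r) c ([:1, a:] ^ r * f)"
    by (rule shear_Suc_linear_mult)
  then show ?case using Suc.IH by (simp only: add_Suc_right power_Suc mult.assoc)
qed

lemma shear_binom_basis: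
  assumes "i \<le> d"
  shows "shear d c (binom_basis d a b i) = binom_basis d (a + c) (b + c) i"
proof -
  have "shear (0 + i) c ([:1, b:] ^ i * 1) = [:1, b + c:] ^ i * 1"
    by (rule shear_linear_power_mult) (simp_all add: shear_def)
  then have "shear i c ([:1, b:] ^ i) = [:1, b + c:] ^ i" by simp
  moreover have "degree ([:1, b:] ^ i) \<le> i"
    using degree_power_le[of "[:1, b:]" i] by (auto split: if_splits)
  ultimately have "shear (i + (d - i)) c ([:1, a:] ^ (d - i) * [:1, b:] ^ i)
      = [:1, a + c:] ^ (d - i) * [:1, b + c:] ^ i"
    by (rule shear_linear_power_mult)
  then show ?thesis using assms by (simp add: binom_basis_def)
qed

lemma coeff_linear_power_self: "coeff ([:1, e:] ^ i) i = (e :: 'a::field) ^ i"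
proof (cases "e = 0")
  case True
  then show ?thesis by (cases i) (auto simp: pCons_one)
next
  case False
  then have "degree ([:1, e:] ^ i) = i" by (simp add: degree_power_eq)
  then have "coeff ([:1, e:] ^ i) i = lead_coeff ([:1, e:] ^ i)" by simp
  then show ?thesis using False by (simp add: lead_coeff_power)
qed

text \<open>The shear with c = -a carries the binomial basis to the triangular basis (1 + (b - a) x)^i.\<close>
lemma invertible_binom_basis:
  fixes a b :: "'a::field"
  assumes char: "CHAR('a) = 0 \<or> d < CHAR('a)" and ab: "a \<noteq> b"
  shows "invertible_mat (basis_mat d (\<lambda>i. poly_vec d (binom_basis d a b i)))"
proof -
  define C where "C g = mat (d+1) (d+1) (\<lambda>(k, i). coeff (g i) k)" for g :: "nat \<Rightarrow> 'a poly"
  define S where "S = mat (d+1) (d+1) (\<lambda>(k, j). coeff (monom 1 j * [:1, -a:] ^ (d - j)) k)"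
  let ?g = "binom_basis d a b" and ?t = "\<lambda>i. [:1, b - a:] ^ i"
  define D where "D = mat_diag (d+1) (\<lambda>k. of_nat (fact (d - k)) :: 'a)"
  have C: "C g \<in> carrier_mat (d+1) (d+1)" for g by (simp add: C_def)
  have S: "S \<in> carrier_mat (d+1) (d+1)" by (simp add: S_def)
  have U: "basis_mat d (\<lambda>i. poly_vec d (?g i)) = D * C ?g"
    unfolding D_def mat_diag_mult_left[OF C] by (rule eq_matI) (auto simp: basis_mat_def poly_vec_def C_def)
  have SC: "S * C ?g = C ?t"
  proof (rule eq_matI)
    fix k i assume "k < dim_row (C ?t)" "i < dim_col (C ?t)"
    then have k: "k \<le> d" and i: "i \<le> d" by (auto simp: C_def)
    have "(S * C ?g) $$ (k, i) = (\<Sum>j<d+1. coeff (?g i) j * coeff (monom 1 j * [:1, -a:] ^ (d - j)) k)"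
      using k i by (simp add: S_def C_def scalar_prod_def row_def col_def lessThan_atLeast0 mult.commute)
    also have "\<dots> = coeff (shear d (-a) (?g i)) k"
      by (simp add: shear_def coeff_sum lessThan_Suc_atMost)
    also have "\<dots> = coeff (binom_basis d (a + - a) (b + - a) i) k"
      by (simp only: shear_binom_basis[OF i])
    also have "\<dots> = C ?t $$ (k, i)"
      using k i by (simp add: C_def binom_basis_def pCons_one)
    finally show "(S * C ?g) $$ (k, i) = C ?t $$ (k, i)" .
  qed (auto simp: S_def C_def)
  have "upper_triangular (C ?t)"
  proof (unfold upper_triangular_def, intro allI impI)
    fix k i assume "k < dim_row (C ?t)" "i < k"
    moreover have "degree (?t i) \<le> i" using degree_power_le[of "[:1, b - a:]" i] by (auto split: if_splits)
    ultimately show "C ?t $$ (k, i) = 0" by (auto simp: C_def coeff_eq_0)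
  qed
  then have "det (C ?t) \<noteq> 0"
    by (rule det_upper_triangular_nonzero[OF _ C]) (use ab in \<open>simp add: C_def coeff_linear_power_self\<close>)
  then have "det (C ?g) \<noteq> 0" unfolding SC[symmetric] det_mult[OF S C] by simp
  moreover have "invertible_mat D"
    unfolding D_def by (rule invertible_mat_diag) (use fact_nonzero_if_char[OF char] in simp)
  then have "det D \<noteq> 0" by (simp add: D_def invertible_mat_iff_det_nonzero[OF mat_diag_dim])
  moreover have Dc: "D \<in> carrier_mat (d+1) (d+1)" by (simp add: D_def)
  ultimately show ?thesis
    unfolding U invertible_mat_iff_det_nonzero[OF mult_carrier_mat[OF Dc C]] det_mult[OF Dc C] by simp
qed

section \<open>The Leonard pair\<close>

lemma sl2_mat_mult_binom_basis_mat:
  fixes a b :: "'a::field"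
  assumes "a \<noteq> b"
  shows "sl2_mat d \<alpha> \<beta> \<gamma> * basis_mat d (\<lambda>i. poly_vec d (binom_basis d a b i))
    = basis_mat d (\<lambda>i. poly_vec d (binom_basis d a b i)) *
      tridiag_mat d (\<lambda>i. \<gamma> + (of_nat d - 2 * of_nat i) * (\<alpha> - \<beta> * a * b) / (a - b))
        (\<lambda>i. of_nat i * (\<alpha> - \<beta> * b ^ 2) / (a - b)) (\<lambda>i. of_nat (d - i) * (\<beta> * a ^ 2 - \<alpha>) / (a - b))"
  by (rule mult_basis_mat_tridiag[OF sl2_mat_carrier poly_vec_carrier sl2_mat_acts_binom_basis[OF assms]])

lemma neq_uminus_self:
  fixes a :: "'a::field"
  assumes "(2::'a) \<noteq> 0" and "a \<noteq> 0"
  shows "a \<noteq> - a"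
proof
  assume "a = - a"
  have "2 * a = a + a" by (rule mult_2)
  also have "\<dots> = a + - a" using \<open>a = - a\<close> by (rule arg_cong)
  finally show False using assms by simp
qed

lemma sl2_mat_mult_binom_basis_mat_eigen:
  fixes a :: "'a::field"
  assumes a: "a \<noteq> 0" and two: "(2::'a) \<noteq> 0" and \<alpha>: "\<alpha> = \<beta> * a ^ 2"
  shows "sl2_mat d \<alpha> \<beta> \<gamma> * basis_mat d (\<lambda>i. poly_vec d (binom_basis d a (- a) i))
    = basis_mat d (\<lambda>i. poly_vec d (binom_basis d a (- a) i)) *
      mat_diag (d+1) (\<lambda>i. \<gamma> + (of_nat d - 2 * of_nat i) * \<beta> * a)"
proof -
  have two_a: "a - - a = 2 * a" by (metis diff_minus_eq_add mult_2)
  have "a \<noteq> - a" by (rule neq_uminus_self[OF two a])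
  have x0: "c * (\<alpha> - \<beta> * a * - a) / (a - - a) = c * \<beta> * a" for c
    using a two unfolding two_a \<alpha> by (simp add: power2_eq_square)
  have "tridiag_mat d (\<lambda>i. \<gamma> + (of_nat d - 2 * of_nat i) * (\<alpha> - \<beta> * a * - a) / (a - - a))
      (\<lambda>i. of_nat i * (\<alpha> - \<beta> * (- a) ^ 2) / (a - - a)) (\<lambda>i. of_nat (d - i) * (\<beta> * a ^ 2 - \<alpha>) / (a - - a))
    = mat_diag (d+1) (\<lambda>i. \<gamma> + (of_nat d - 2 * of_nat i) * \<beta> * a)"
    unfolding x0 by (simp add: \<alpha> tridiag_mat_diag)
  then show ?thesis using sl2_mat_mult_binom_basis_mat[OF \<open>a \<noteq> - a\<close>] by simp
qed

lemma irred_tridiag_sl2_binom: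
  fixes a b :: "'a::field"
  assumes char: "CHAR('a) = 0 \<or> d < CHAR('a)" and ab: "a \<noteq> b"
    and "\<alpha> \<noteq> \<beta> * a ^ 2" and "\<alpha> \<noteq> \<beta> * b ^ 2"
  shows "irred_tridiag (d+1) (tridiag_mat d x0 (\<lambda>i. of_nat i * (\<alpha> - \<beta> * b ^ 2) / (a - b))
    (\<lambda>i. of_nat (d - i) * (\<beta> * a ^ 2 - \<alpha>) / (a - b)))"
proof (rule irred_tridiag_tridiag_mat)
  fix j assume "0 < j" "j \<le> d"
  then show "of_nat j * (\<alpha> - \<beta> * b ^ 2) / (a - b) \<noteq> 0"
    using assms of_nat_nonzero_if_char[OF char] by simp
next
  fix j assume "j < d"
  then have "(of_nat (d - j) :: 'a) \<noteq> 0" by (intro of_nat_nonzero_if_char[OF char]) auto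
  then show "of_nat (d - j) * (\<beta> * a ^ 2 - \<alpha>) / (a - b) \<noteq> 0" using assms by simp
qed

locale sl2_leonard_pair =
  fixes d :: nat and s :: "'a::field"
  assumes char: "CHAR('a) = 0 \<or> d < CHAR('a)"
    and two: "(2::'a) \<noteq> 0"
    and s: "s \<noteq> 0"
    and s_square: "s ^ 2 \<noteq> 1"
begin

definition theta :: "nat \<Rightarrow> 'a" where
  "theta i = of_nat d - 2 * of_nat i"

lemma theta_distinct: "\<forall>i\<le>d. \<forall>j\<le>d. i \<noteq> j \<longrightarrow> theta i \<noteq> theta j"
proof (intro allI impI)
  fix i j assume ij: "i \<le> d" "j \<le> d" "i \<noteq> j"
  show "theta i \<noteq> theta j"
  proof
    assume "theta i = theta j"
    then have "(of_nat i :: 'a) = of_nat j" using two by (simp add: theta_def)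
    then have "(of_nat (max i j - min i j) :: 'a) = 0" by (simp add: of_nat_diff max_def min_def)
    moreover have "0 < max i j - min i j" "max i j - min i j \<le> d" using ij by auto
    ultimately show False using of_nat_nonzero_if_char[OF char] by blast
  qed
qed

lemma s_neq: "s \<noteq> 1" "s \<noteq> -1" "s \<noteq> - s" "s - inverse s \<noteq> 0"
proof -
  show "s \<noteq> 1" "s \<noteq> -1" using s_square by auto
  show "s \<noteq> - s" by (rule neq_uminus_self[OF two s])
  show "s - inverse s \<noteq> 0" using s s_square by (simp add: field_simps power2_eq_square)
qed

lemma leonard_pair_and_system:
  "leonard_pair d (sl2_mat d 1 1 0) (sl2_mat d s (inverse s) 0) \<and>
   leonard_system d (sl2_mat d 1 1 0) theta (prim_idem d (sl2_mat d 1 1 0) theta)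
     (sl2_mat d s (inverse s) 0) theta (prim_idem d (sl2_mat d s (inverse s) 0) theta)"
proof -
  let ?P = "basis_mat d (\<lambda>i. poly_vec d (binom_basis d s (- s) i))"
  let ?Q = "basis_mat d (\<lambda>i. poly_vec d (binom_basis d (1::'a) (- 1) i))"
  have "(1::'a) \<noteq> - 1" by (rule neq_uminus_self[OF two one_neq_zero])
  have inv: "invertible_mat ?P" "invertible_mat ?Q"
    using invertible_binom_basis[OF char s_neq(3)] invertible_binom_basis[OF char \<open>1 \<noteq> - 1\<close>]
    by simp_all
  have "(\<lambda>i. 0 + (of_nat d - 2 * of_nat i) * inverse s * s) = theta"
    "(\<lambda>i. 0 + (of_nat d - 2 * of_nat i) * 1 * 1) = theta"
    using s by (simp_all add: theta_def fun_eq_iff)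
  moreover have "s = inverse s * s ^ 2" using s by (simp add: power2_eq_square)
  ultimately have eig: "sl2_mat d s (inverse s) 0 * ?P = ?P * mat_diag (d+1) theta"
    "sl2_mat d 1 1 0 * ?Q = ?Q * mat_diag (d+1) theta"
    using sl2_mat_mult_binom_basis_mat_eigen[OF s two, of s "inverse s" d 0]
      sl2_mat_mult_binom_basis_mat_eigen[OF one_neq_zero two, of 1 1 d 0]
    by simp_all
  have "(1::'a) \<noteq> 1 * s ^ 2" "(1::'a) \<noteq> 1 * (- s) ^ 2" "s \<noteq> inverse s * 1 ^ 2" "s \<noteq> inverse s * (- 1) ^ 2"
    using s_square s_neq(4) by auto
  then have irr: "irred_tridiag (d+1) (tridiag_mat d x0
        (\<lambda>i. of_nat i * (1 - 1 * (- s) ^ 2) / (s - - s)) (\<lambda>i. of_nat (d - i) * (1 * s ^ 2 - 1) / (s - - s)))"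
      "irred_tridiag (d+1) (tridiag_mat d y0
        (\<lambda>i. of_nat i * (s - inverse s * (- 1) ^ 2) / (1 - - 1))
        (\<lambda>i. of_nat (d - i) * (inverse s * 1 ^ 2 - s) / (1 - - 1)))" for x0 y0
    by (intro irred_tridiag_sl2_binom[OF char s_neq(3)] irred_tridiag_sl2_binom[OF char \<open>1 \<noteq> - 1\<close>]; simp)+
  show ?thesis
    using leonard_pair_if_bases[OF sl2_mat_carrier sl2_mat_carrier basis_mat_carrier inv(1)
        sl2_mat_mult_binom_basis_mat[OF s_neq(3)] eig(1) irr(1) basis_mat_carrier inv(2)
        sl2_mat_mult_binom_basis_mat[OF \<open>1 \<noteq> - 1\<close>] eig(2) irr(2)]
      leonard_system_if_bases[OF sl2_mat_carrier sl2_mat_carrier basis_mat_carrier inv(1)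
        sl2_mat_mult_binom_basis_mat[OF s_neq(3)] eig(1) irr(1) basis_mat_carrier inv(2)
        sl2_mat_mult_binom_basis_mat[OF \<open>1 \<noteq> - 1\<close>] eig(2) irr(2) theta_distinct theta_distinct]
    by blast
qed

lemma split_coefficients:
  assumes e: "e ^ 2 = 1"
  shows "s \<noteq> - e" "s - e \<noteq> 0"
    "c * (1 - 1 * s * - e) / (s - - e) = c * e"
    "c * (1 - 1 * (- e) ^ 2) / (s - - e) = 0"
    "c * (1 * s ^ 2 - 1) / (s - - e) = c * (s - e)"
    "c * (s - inverse s * s * - e) / (s - - e) = c"
    "c * (s - inverse s * (- e) ^ 2) / (s - - e) = c * (s - e) / s"
    "c * (inverse s * s ^ 2 - s) / (s - - e) = 0"
    "c * (s + inverse s - 2 * e) = c * (s - e) / s * (s - e)"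
proof -
  show "s \<noteq> - e" "s - e \<noteq> 0" using e s_square by auto
  then have se: "s - - e \<noteq> 0" by (simp add: eq_neg_iff_add_eq_0)
  have e2: "e * e = 1" using e by (simp add: power2_eq_square)
  have m1: "1 - 1 * s * - e = e * (s - - e)" using e2 by (simp add: algebra_simps)
  have m2: "1 * s ^ 2 - 1 = (s - e) * (s - - e)" using e2 by (simp add: algebra_simps power2_eq_square)
  have m3: "s - inverse s * s * - e = s - - e" using s by simp
  have m4: "s - inverse s * (- e) ^ 2 = (s - e) * (s - - e) / s"
    using s e2 by (simp add: field_simps power2_eq_square)
  show "c * (1 - 1 * s * - e) / (s - - e) = c * e" unfolding m1 using se by simp
  show "c * (1 - 1 * (- e) ^ 2) / (s - - e) = 0" using e by simp
  show "c * (1 * s ^ 2 - 1) / (s - - e) = c * (s - e)" unfolding m2 using se by simp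
  show "c * (s - inverse s * s * - e) / (s - - e) = c" unfolding m3 using se by simp
  show "c * (s - inverse s * (- e) ^ 2) / (s - - e) = c * (s - e) / s" unfolding m4 using se by simp
  show "c * (inverse s * s ^ 2 - s) / (s - - e) = 0" using s by (simp add: power2_eq_square)
  show "c * (s + inverse s - 2 * e) = c * (s - e) / s * (s - e)" using s e2 by (simp add: field_simps)
qed

text \<open>e = 1 gives the first split sequence, e = -1 the second one, whose eigenvalue sequence of A is
  reversed.\<close>
lemma first_split_sl2:
  assumes e: "e ^ 2 = 1" and th: "\<And>i. i \<le> d \<Longrightarrow> th i = e * theta i"
  shows "first_split d (sl2_mat d 1 1 0) th (sl2_mat d s (inverse s) 0) theta
    (\<lambda>j. of_nat (j * (d - j + 1)) * (s + inverse s - 2 * e))"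
proof -
  let ?u = "\<lambda>i. poly_vec d (binom_basis d s (- e) i)"
  note coeffs = split_coefficients[OF e]
  have shifted: "acts_tridiag d (sl2_mat d 1 1 \<gamma>) ?u (\<lambda>j. \<gamma> + e * theta j) (\<lambda>_. 0)
      (\<lambda>j. of_nat (d - j) * (s - e))" for \<gamma>
    by (rule acts_tridiag_cong[OF sl2_mat_acts_binom_basis[OF coeffs(1)]]) (unfold coeffs, simp add: theta_def)
  have step: "(sl2_mat d 1 1 0 - th i \<cdot>\<^sub>m 1\<^sub>m (d+1)) *\<^sub>v ?u i = (of_nat (d - i) * (s - e)) \<cdot>\<^sub>v ?u (i + 1)"
    if "i < d" for i
  proof -
    have "(sl2_mat d 1 1 0 - th i \<cdot>\<^sub>m 1\<^sub>m (d+1)) *\<^sub>v ?u i = (0 - th i + e * theta i) \<cdot>\<^sub>v ?u i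
        + 0 \<cdot>\<^sub>v ?u (i - 1) + (of_nat (d - i) * (s - e)) \<cdot>\<^sub>v ?u (i + 1)"
      using shifted[of "0 - th i"] that unfolding sl2_mat_minus_smult_one acts_tridiag_def by simp
    then show ?thesis using th[of i] that by (auto simp: poly_vec_def intro!: eq_vecI)
  qed
  have act: "acts_tridiag d (sl2_mat d s (inverse s) 0) ?u theta (\<lambda>j. of_nat j * (s - e) / s) (\<lambda>_. 0)"
    by (rule acts_tridiag_cong[OF sl2_mat_acts_binom_basis[OF coeffs(1)]]) (unfold coeffs, simp add: theta_def)
  show ?thesis
  proof (rule first_split_if_basis[OF sl2_mat_carrier sl2_mat_carrier poly_vec_carrier
        invertible_binom_basis[OF char coeffs(1)] step _ act _ theta_distinct])
    show "of_nat (d - i) * (s - e) \<noteq> 0" if "i < d" for i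
      using that coeffs(2) of_nat_nonzero_if_char[OF char, of "d - i"] by simp
    show "of_nat (j * (d - j + 1)) * (s + inverse s - 2 * e)
        = of_nat j * (s - e) / s * (of_nat (d - (j - 1)) * (s - e))" if "0 < j" "j \<le> d" for j
    proof -
      have "d - (j - 1) = d - j + 1" using that by simp
      then show ?thesis unfolding coeffs(9) by (simp add: field_simps)
    qed
  qed
qed

lemma fundamental_parameter_sl2: "fundamental_parameter d (sl2_mat d 1 1 0) (sl2_mat d s (inverse s) 0) 2"
  unfolding fundamental_parameter_def
proof (intro exI conjI allI impI)
  show "leonard_system d (sl2_mat d 1 1 0) theta (prim_idem d (sl2_mat d 1 1 0) theta)
      (sl2_mat d s (inverse s) 0) theta (prim_idem d (sl2_mat d s (inverse s) 0) theta)"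
    using leonard_pair_and_system by blast
  fix i assume "2 \<le> i \<and> i \<le> d - 1"
  then have "theta (i - 2) - theta (i + 1) = 3 * 2" "theta (i - 1) - theta i = 2"
    by (simp_all add: theta_def of_nat_diff algebra_simps)
  then show "(theta (i - 2) - theta (i + 1)) / (theta (i - 1) - theta i) = 2 + 1"
    using two by simp
qed

end

theorem proposition7p1:
  fixes s :: "'a::alg_closed_field" and d :: nat and A As :: "'a mat"
  assumes "d \<ge> 3" and "s \<noteq> 0"
    and "CHAR('a) = 0 \<or> CHAR('a) > d"
    and "s ^ 2 \<noteq> 1"
    and "A = mat (d+1) (d+1) (\<lambda>(i, j). if i = j + 1 then 1
              else if j = i + 1 then of_nat (j * (d - j + 1)) else 0)"
    and "As = mat (d+1) (d+1) (\<lambda>(i, j). if i = j + 1 then s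
              else if j = i + 1 then inverse s * of_nat (j * (d - j + 1)) else 0)"
  shows "leonard_pair d A As \<and> fundamental_parameter d A As 2 \<and>
         parameter_array d A As
           (\<lambda>i. of_int (int d - 2 * int i)) (\<lambda>i. of_int (int d - 2 * int i))
           (\<lambda>i. of_nat (i * (d - i + 1)) * (s + inverse s - 2))
           (\<lambda>i. of_nat (i * (d - i + 1)) * (s + inverse s + 2))"
proof -
  have "(2::'a) \<noteq> 0" using of_nat_nonzero_if_char[OF assms(3), of 2] assms(1) by simp
  then interpret sl2_leonard_pair d s
    using assms(2-4) by unfold_locales simp_all
  have A: "A = sl2_mat d 1 1 0" and As: "As = sl2_mat d s (inverse s) 0"
    unfolding assms(5,6) sl2_mat_def by (auto intro!: eq_matI)
  have theta: "(\<lambda>i. of_int (int d - 2 * int i)) = theta" by (simp add: theta_def fun_eq_iff)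
  have "first_split d A theta As theta (\<lambda>i. of_nat (i * (d - i + 1)) * (s + inverse s - 2))"
    using first_split_sl2[of 1 theta] unfolding A As by simp
  moreover have "second_split d A theta As theta (\<lambda>i. of_nat (i * (d - i + 1)) * (s + inverse s + 2))"
    using first_split_sl2[of "- 1" "\<lambda>i. theta (d - i)"] unfolding second_split_def A As
    by (simp add: theta_def of_nat_diff)
  ultimately show ?thesis
    unfolding theta parameter_array_def
    using leonard_pair_and_system fundamental_parameter_sl2 unfolding A As by blast
qed

end
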